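(* Let $\sigma = 2$. For every Parikh vector $P \in \mathbb{N}_0^{2}$ and every word $w \in \Sigma^{*|_P}$, there exists a Hamiltonian path in the configuration graph $G(P)$ starting at $w$.
   Context: Alphabet $\Sigma = \{1,2\}$. For $P \in \mathbb{N}_0^2$, $n := P[1]+P[2]$ and $\Sigma^{*|_P}$ is the set of words of length $n$ with exactly $P[1]$ occurrences of $1$ and $P[2]$ occurrences of $2$. For a word $w$ and $i\neq j$ with $w[i]\neq w[j]$, the 2-swap $w\circ(i,j)$ exchanges the symbols at positions $i$ and $j$. The configuration graph $G(P)$ has vertex set $\Sigma^{*|_P}$ and an edge $\{w,u\}$ whenever $u = w\circ(i,j)$ for some 2-swap. A Hamiltonian path starting at $w$ is a path beginning at $w$ that visits every vertex exactly once. *)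

theory Defs
  imports Main
begin

text \<open>Alphabet Sigma = {1,2} (letters as naturals). A Parikh vector P in N0^2 is
  given by its two entries p1 = P[1] and p2 = P[2].\<close>

definition words_P :: "nat \<Rightarrow> nat \<Rightarrow> nat list set" where
  "words_P p1 p2 = {w. length w = p1 + p2 \<and> set w \<subseteq> {1, 2}
      \<and> count_list w 1 = p1 \<and> count_list w 2 = p2}"

definition swap2 :: "nat list \<Rightarrow> nat \<Rightarrow> nat \<Rightarrow> nat list" where
  "swap2 w i j = w[i := w ! j, j := w ! i]"

definition conf_edge :: "nat list \<Rightarrow> nat list \<Rightarrow> bool" where
  "conf_edge w u \<longleftrightarrow> (\<exists>i j. i < length w \<and> j < length w \<and> i \<noteq> j
      \<and> w ! i \<noteq> w ! j \<and> u = swap2 w i j)"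

definition ham_path_from :: "nat \<Rightarrow> nat \<Rightarrow> nat list \<Rightarrow> nat list list \<Rightarrow> bool" where
  "ham_path_from p1 p2 w ps \<longleftrightarrow> ps \<noteq> [] \<and> hd ps = w \<and> distinct ps
      \<and> set ps = words_P p1 p2
      \<and> (\<forall>k. Suc k < length ps \<longrightarrow> conf_edge (ps ! k) (ps ! Suc k))"

end

theory Submission
  imports Defs "HOL-Combinatorics.Multiset_Permutations"
begin

text \<open>The statement holds for the rearrangements of an arbitrary multiset of letters.
  Induct on the multiset: the words beginning with a fixed letter form a copy of the
  smaller graph, so they can be traversed from any start. List the distinct letters as
  a1, ..., ak with a1 the first letter of w, and traverse the block of a1 starting at w.
  Its last word a1 u still contains the letter a2, so exchanging the first letter with an
  occurrence of a2 in u is an edge into the block of a2, which is traversed next, and so on.\<close>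

definition ham_path :: "nat list set \<Rightarrow> nat list \<Rightarrow> nat list list \<Rightarrow> bool" where
  "ham_path V w ps \<longleftrightarrow> ps \<noteq> [] \<and> hd ps = w \<and> distinct ps \<and> set ps = V
      \<and> successively conf_edge ps"

lemma ham_path_from_iff_ham_path:
  "ham_path_from p1 p2 w ps \<longleftrightarrow> ham_path (words_P p1 p2) w ps"
  unfolding ham_path_from_def ham_path_def successively_conv_nth by simp

lemma words_P_eq_permutations_of_multiset:
  "words_P p1 p2 = permutations_of_multiset (replicate_mset p1 1 + replicate_mset p2 2)"
proof (intro equalityI subsetI)
  fix w assume "w \<in> words_P p1 p2"
  then have "count (mset w) x = count (replicate_mset p1 1 + replicate_mset p2 2) x" for x
    by (cases "x \<in> set w") (auto simp: words_P_def count_mset count_list_0_iff)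
  then show "w \<in> permutations_of_multiset (replicate_mset p1 1 + replicate_mset p2 2)"
    by (simp add: permutations_of_multisetI multiset_eqI)
next
  fix w :: "nat list" assume "w \<in> permutations_of_multiset (replicate_mset p1 1 + replicate_mset p2 2)"
  then have w: "mset w = replicate_mset p1 1 + replicate_mset p2 2"
    by (rule permutations_of_multisetD)
  then have "length w = p1 + p2" "set w \<subseteq> {1, 2}"
    by (metis size_mset size_union size_replicate_mset)
       (use w set_mset_replicate_mset_subset in \<open>auto simp flip: set_mset_mset\<close>)
  then show "w \<in> words_P p1 p2"
    using w by (simp add: words_P_def flip: count_mset)
qed

lemma conf_edge_Cons:
  assumes "conf_edge x y"
  shows "conf_edge (a # x) (a # y)"
proof -
  from assms obtain i j where "i < length x" "j < length x" "i \<noteq> j" "x ! i \<noteq> x ! j"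
    "y = swap2 x i j"
    unfolding conf_edge_def by blast
  then show ?thesis
    unfolding conf_edge_def swap2_def by (intro exI[of _ "Suc i"] exI[of _ "Suc j"]) simp
qed

lemma conf_edge_swap_head:
  assumes "a \<noteq> b"
  shows "conf_edge (a # ys @ b # zs) (b # ys @ a # zs)"
  unfolding conf_edge_def swap2_def
  using assms by (intro exI[of _ 0] exI[of _ "Suc (length ys)"]) (simp add: list_update_append)

lemma ham_path_map_Cons:
  "ham_path V w ps \<Longrightarrow> ham_path (Cons a ` V) (a # w) (map (Cons a) ps)"
  unfolding ham_path_def
  by (auto simp: distinct_map hd_map successively_map intro: successively_mono conf_edge_Cons)

lemma ham_path_append:
  assumes "ham_path A v ps" "ham_path B u qs" "A \<inter> B = {}" "conf_edge (last ps) u"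
  shows "ham_path (A \<union> B) v (ps @ qs)"
  using assms unfolding ham_path_def by (auto simp: successively_append_iff)

lemma ham_path_letter_blocks:
  assumes traceable_blocks: "\<And>a v. a \<in># M \<Longrightarrow> v \<in> permutations_of_multiset (M - {#a#}) \<Longrightarrow>
      \<exists>ps. ham_path (permutations_of_multiset (M - {#a#})) v ps"
    and "distinct (a # as)" "set (a # as) \<subseteq> set_mset M"
    and "v \<in> permutations_of_multiset (M - {#a#})"
  shows "\<exists>ps. ham_path (\<Union>b\<in>set (a # as). Cons b ` permutations_of_multiset (M - {#b#})) (a # v) ps"
  using assms(2-)
proof (induction as arbitrary: a v)
  case Nil
  then obtain ps where "ham_path (permutations_of_multiset (M - {#a#})) v ps"
    using traceable_blocks[of a v] by auto
  then have "ham_path (Cons a ` permutations_of_multiset (M - {#a#})) (a # v) (map (Cons a) ps)"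
    by (rule ham_path_map_Cons)
  then show ?case
    by auto
next
  case (Cons b bs)
  obtain ps where ps: "ham_path (permutations_of_multiset (M - {#a#})) v ps"
    using traceable_blocks[of a v] Cons.prems(2,3) by auto
  have "a \<noteq> b" "a \<in># M" "b \<in># M"
    using Cons.prems(1,2) by auto
  define u where "u = last ps"
  have "u \<in> permutations_of_multiset (M - {#a#})"
    using ps last_in_set unfolding ham_path_def u_def by blast
  then have u: "mset u = M - {#a#}"
    by (rule permutations_of_multisetD)
  have "b \<in># mset u"
    using \<open>a \<noteq> b\<close> \<open>b \<in># M\<close> by (simp add: u in_diff_count)
  then obtain ys zs where yz: "u = ys @ b # zs"
    by (meson in_multiset_in_set split_list)
  have "mset (ys @ a # zs) = add_mset a (mset u - {#b#})"
    by (simp add: yz)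
  also have "\<dots> = add_mset a (M - {#b#} - {#a#})"
    by (simp add: u add_mset_commute)
  also have "\<dots> = M - {#b#}"
    using \<open>a \<noteq> b\<close> \<open>a \<in># M\<close> by (intro insert_DiffM) (simp add: in_diff_count)
  finally have "ys @ a # zs \<in> permutations_of_multiset (M - {#b#})"
    by (rule permutations_of_multisetI)
  with Cons.prems(1,2) obtain qs where
    qs: "ham_path (\<Union>c\<in>set (b # bs). Cons c ` permutations_of_multiset (M - {#c#}))
      (b # ys @ a # zs) qs"
    using Cons.IH[of b "ys @ a # zs"] by auto
  have "ham_path (Cons a ` permutations_of_multiset (M - {#a#}) \<union>
      (\<Union>c\<in>set (b # bs). Cons c ` permutations_of_multiset (M - {#c#}))) (a # v) (map (Cons a) ps @ qs)"
  proof (rule ham_path_append[OF ham_path_map_Cons[OF ps] qs])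
    show "Cons a ` permutations_of_multiset (M - {#a#}) \<inter>
        (\<Union>c\<in>set (b # bs). Cons c ` permutations_of_multiset (M - {#c#})) = {}"
      using Cons.prems(1) by auto
    show "conf_edge (last (map (Cons a) ps)) (b # ys @ a # zs)"
      using ps conf_edge_swap_head[OF \<open>a \<noteq> b\<close>]
      by (simp add: last_map ham_path_def flip: u_def add: yz)
  qed
  then show ?case
    by auto
qed

theorem ham_path_permutations_of_multiset:
  "w \<in> permutations_of_multiset M \<Longrightarrow> \<exists>ps. ham_path (permutations_of_multiset M) w ps"
proof (induction M arbitrary: w rule: full_multiset_induct)
  case (less M)
  show ?case
  proof (cases "M = {#}")
    case True
    with less.prems show ?thesis
      by (intro exI[of _ "[[]]"]) (simp add: ham_path_def)
  next
    case False
    with less.prems have "w \<noteq> []"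
      by (auto simp: permutations_of_multiset_def)
    then obtain a v where w: "w = a # v"
      by (cases w) auto
    with less.prems have "a \<in># M" "v \<in> permutations_of_multiset (M - {#a#})"
      by (simp_all add: permutations_of_multiset_Cons_iff)
    obtain as where as: "distinct as" "set as = set_mset M - {a}"
      using finite_distinct_list by (meson finite_Diff finite_set_mset)
    have "set (a # as) = set_mset M"
      using as \<open>a \<in># M\<close> by auto
    then have blocks: "(\<Union>b\<in>set (a # as). Cons b ` permutations_of_multiset (M - {#b#})) =
        permutations_of_multiset M"
      by (simp only: permutations_of_multiset_nonempty[OF False])
    have "\<exists>ps. ham_path (\<Union>b\<in>set (a # as). Cons b ` permutations_of_multiset (M - {#b#})) (a # v) ps"
      using less.IH \<open>a \<in># M\<close> \<open>v \<in> permutations_of_multiset (M - {#a#})\<close> as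
      by (intro ham_path_letter_blocks) (auto intro: mset_subset_diff_self)
    then show ?thesis
      unfolding blocks w .
  qed
qed

theorem theorem2:
  fixes p1 p2 :: nat and w :: "nat list"
  assumes "w \<in> words_P p1 p2"
  shows "\<exists>ps. ham_path_from p1 p2 w ps"
  using ham_path_permutations_of_multiset assms
  unfolding ham_path_from_iff_ham_path words_P_eq_permutations_of_multiset by blast

end
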